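(* Let $\pi\subseteq\mathbb{R}^{s+1}$ be an absolutely rational subspace with $\dim\pi\ge 2$ and let $\Lambda=\mathbb{Z}^{s+1}\cap\pi$. Let $\zeta\in\Lambda$ be a point with positive first coordinate such that the sequence of best approximations to the ray $\ell(\zeta)$ is $\mathcal{B}(\ell(\zeta))=\{\zeta^1,\zeta^2,\dots,\zeta^\tau,\dots,\zeta^t\}$ with $\zeta^t=\zeta$, and such that $\mathcal{B}_\tau^t(\ell(\zeta))=\{\zeta^\tau,\dots,\zeta^t\}\subset\Lambda$. Suppose that $D(\zeta^\tau)<D(\xi)$ for every integer point $\xi$ not belonging to $\pi$ (with $D$ computed with respect to the ray $\ell(\zeta)$). Then there exists $\epsilon>0$ such that every ray $\ell'\subset K_\epsilon(\ell(\zeta))$ satisfies: (1) $\mathcal{B}(\ell')\supset\mathcal{B}(\ell(\zeta))$; (2) all best approximations to $\ell'$ lying between the approximations $\zeta^\tau$ and $\zeta^t$ (in the ordering of $\mathcal{B}(\ell')$) belong to $\pi$.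
   Context: In $\mathbb{R}^{s+1}$ with coordinates $(x,y_1,\dots,y_s)$, a ray $\ell$ is a ray from the origin lying in the half-space $\{x>0\}$. For small $\epsilon>0$, the open cone $K_\epsilon(\ell)$ consists of all rays $\ell'$ making an angle less than $\epsilon$ with $\ell$. For $\xi$ with $x>0$, $\ell(\xi)=\{\kappa\xi:\kappa\ge0\}$. A subspace $\pi$ is absolutely rational if the lattice $\pi\cap\mathbb{Z}^{s+1}$ has dimension $\dim\pi$. For a ray $\ell$ parallel to $(1,\beta_1,\dots,\beta_s)$ and an integer point $\xi=(q,b_1,\dots,b_s)$, $D(\xi)=\max_j|q\beta_j-b_j|$. A best approximation to $\ell$ is a best simultaneous approximation to $\beta=(\beta_1,\dots,\beta_s)$, i.e. an integer point $(p,a_1,\dots,a_s)$ with $p\ge1$ such that $\max_j|p\beta_j-a_j|<\max_j|q\beta_j-b_j|$ for all $1\le q\le p$ and $(b_1,\dots,b_s)\in\mathbb{Z}^s\setminus\{(a_1,\dots,a_s)\}$. When no $\beta_j$ is a half of an integer, these form a well-defined sequence $\mathcal{B}(\ell)=\{\zeta^1,\zeta^2,\dots\}$ ordered by increasing first coordinate $p^1<p^2<\dots$ (finite if $\ell$ contains a nonzero integer point, infinite otherwise), and $\mathcal{B}_k^t(\ell)=\{\zeta^k,\zeta^{k+1},\dots,\zeta^t\}$. *)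

theory Defs
  imports "HOL-Analysis.Analysis"
begin

text \<open>Points of R^(s+1) are pairs (x, y) with x the first coordinate and
  y :: real^'n the remaining s = CARD('n) coordinates.\<close>

definition int_pt :: "real \<times> (real^'n) \<Rightarrow> bool" where
  "int_pt \<xi> \<longleftrightarrow> fst \<xi> \<in> \<int> \<and> (\<forall>j. snd \<xi> $ j \<in> \<int>)"

definition absolutely_rational :: "(real \<times> (real^'n)) set \<Rightarrow> bool" where
  "absolutely_rational \<pi> \<longleftrightarrow> subspace \<pi> \<and> dim (\<pi> \<inter> {\<xi>. int_pt \<xi>}) = dim \<pi>"

text \<open>A ray in the half-space x > 0 is given by a direction vector v with fst v > 0;
  it is parallel to (1, beta) with beta = snd v / fst v.\<close>
definition ray_beta :: "real \<times> (real^'n) \<Rightarrow> real^'n" where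
  "ray_beta v = (1 / fst v) *\<^sub>R snd v"

definition Dapp :: "real \<times> (real^'n) \<Rightarrow> real \<times> (real^'n) \<Rightarrow> real" where
  "Dapp v \<xi> = Max (range (\<lambda>j. \<bar>fst \<xi> * ray_beta v $ j - snd \<xi> $ j\<bar>))"

definition best_approx :: "real \<times> (real^'n) \<Rightarrow> real \<times> (real^'n) \<Rightarrow> bool" where
  "best_approx v \<xi> \<longleftrightarrow> int_pt \<xi> \<and> fst \<xi> \<ge> 1 \<and>
     (\<forall>\<eta>. int_pt \<eta> \<and> 1 \<le> fst \<eta> \<and> fst \<eta> \<le> fst \<xi> \<and> \<eta> \<noteq> \<xi> \<longrightarrow> Dapp v \<xi> < Dapp v \<eta>)"

definition ray_angle :: "real \<times> (real^'n) \<Rightarrow> real \<times> (real^'n) \<Rightarrow> real" where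
  "ray_angle u v = arccos ((u \<bullet> v) / (norm u * norm v))"

end

theory Submission
  imports Defs
begin

text \<open>
  Every best approximation \<xi> of the ray through the integer point \<zeta> has
  1 \<le> fst \<xi> \<le> fst \<zeta> and D(\<xi>) \<le> D(1, 0). Integer points form a uniformly discrete set,
  so only finitely many D-values occur among integer points in that range, and distinct
  ones differ by at least some g > 0. For a ray v at small angle to \<zeta> the parameters
  \<beta> are close, hence D_v differs from D_\<zeta> by less than g/2 on all points with
  first coordinate at most fst \<zeta>. Thus every strict inequality between D_\<zeta>-values
  that makes \<xi> a best approximation of \<zeta>, or that separates \<zeta>\<tau> from the integer
  points outside \<pi>, persists for D_v.
\<close>

lemma abs_component_le_Dapp: "\<bar>fst \<eta> * ray_beta u $ j - snd \<eta> $ j\<bar> \<le> Dapp u \<eta>"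
  unfolding Dapp_def by (rule Max_ge) auto

lemma Dapp_nonneg: "0 \<le> Dapp u \<eta>"
  using abs_component_le_Dapp[of \<eta> u undefined] by linarith

lemma Dapp_self: "fst u \<noteq> 0 \<Longrightarrow> Dapp u u = 0"
  unfolding Dapp_def ray_beta_def by simp

lemma Dapp_le_Dapp_add:
  "Dapp u \<eta> \<le> Dapp w \<eta> + \<bar>fst \<eta>\<bar> * norm (ray_beta u - ray_beta w)"
proof -
  have "\<bar>fst \<eta> * ray_beta u $ j - snd \<eta> $ j\<bar> \<le> Dapp w \<eta> + \<bar>fst \<eta>\<bar> * norm (ray_beta u - ray_beta w)"
    for j
  proof -
    have "fst \<eta> * ray_beta u $ j - snd \<eta> $ j
        = (fst \<eta> * ray_beta w $ j - snd \<eta> $ j) + fst \<eta> * (ray_beta u - ray_beta w) $ j"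
      by (simp add: algebra_simps)
    then have "\<bar>fst \<eta> * ray_beta u $ j - snd \<eta> $ j\<bar>
        \<le> \<bar>fst \<eta> * ray_beta w $ j - snd \<eta> $ j\<bar> + \<bar>fst \<eta>\<bar> * \<bar>(ray_beta u - ray_beta w) $ j\<bar>"
      by (metis abs_mult abs_triangle_ineq)
    also have "\<dots> \<le> Dapp w \<eta> + \<bar>fst \<eta>\<bar> * norm (ray_beta u - ray_beta w)"
      by (intro add_mono mult_left_mono abs_component_le_Dapp component_le_norm_cart) simp
    finally show ?thesis .
  qed
  then show ?thesis
    unfolding Dapp_def[of u] by (subst Max_le_iff) auto
qed

lemma abs_Dapp_diff_le:
  "\<bar>Dapp u \<eta> - Dapp w \<eta>\<bar> \<le> \<bar>fst \<eta>\<bar> * norm (ray_beta u - ray_beta w)"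
  using Dapp_le_Dapp_add[of u \<eta> w] Dapp_le_Dapp_add[of w \<eta> u]
  by (simp add: norm_minus_commute)

lemma ray_beta_scaleR: "c > 0 \<Longrightarrow> ray_beta (c *\<^sub>R x) = ray_beta x"
  unfolding ray_beta_def by simp

lemma ray_beta_sgn: "x \<noteq> 0 \<Longrightarrow> ray_beta (sgn x) = ray_beta x"
  by (simp add: sgn_div_norm ray_beta_scaleR)

lemma norm_sgn_diff_power2:
  fixes u v :: "'a::real_inner"
  assumes "u \<noteq> 0" "v \<noteq> 0"
  shows "(norm (sgn v - sgn u))\<^sup>2 = 2 - 2 * ((v \<bullet> u) / (norm v * norm u))"
proof -
  have "(norm (sgn v - sgn u))\<^sup>2 = (norm (sgn v))\<^sup>2 + (norm (sgn u))\<^sup>2 - 2 * (sgn v \<bullet> sgn u)"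
    by (simp add: power2_norm_eq_inner inner_diff inner_commute)
  also have "\<dots> = 2 - 2 * ((v \<bullet> u) / (norm v * norm u))"
    using assms by (simp add: norm_sgn sgn_div_norm field_simps)
  finally show ?thesis .
qed

lemma norm_sgn_diff_less_of_ray_angle:
  assumes "u \<noteq> 0" "v \<noteq> 0" "0 < \<delta>" "\<delta> \<le> 2"
    and "ray_angle v u < arccos (1 - \<delta>\<^sup>2 / 2)"
  shows "norm (sgn v - sgn u) < \<delta>"
proof -
  define c where "c = (v \<bullet> u) / (norm v * norm u)"
  have "\<bar>c\<bar> \<le> 1"
    using Cauchy_Schwarz_ineq2[of v u] assms(1,2) by (simp add: c_def abs_divide divide_le_eq_1)
  moreover have "\<delta>\<^sup>2 \<le> 4"
    using assms(3,4) power_mono[of \<delta> 2 2] by simp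
  moreover have "arccos c < arccos (1 - \<delta>\<^sup>2 / 2)"
    using assms(5) by (simp add: ray_angle_def c_def)
  ultimately have "1 - \<delta>\<^sup>2 / 2 < c"
    by (subst (asm) arccos_less_mono) (auto simp: abs_le_iff)
  then have "(norm (sgn v - sgn u))\<^sup>2 < \<delta>\<^sup>2"
    using norm_sgn_diff_power2[OF assms(1,2)] by (simp add: c_def)
  then show ?thesis
    using assms(3) by (simp add: power_less_imp_less_base)
qed

lemma ray_beta_close_of_small_angle:
  assumes "fst u > 0" "d > 0"
  shows "\<exists>\<epsilon>>0. \<forall>v. fst v > 0 \<and> ray_angle v u < \<epsilon> \<longrightarrow> norm (ray_beta v - ray_beta u) < d"
proof -
  have "u \<noteq> 0" using assms(1) by auto
  then have "fst (sgn u) > 0"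
    using assms(1) by (simp add: sgn_div_norm)
  then have "isCont ray_beta (sgn u)"
    unfolding ray_beta_def by (intro continuous_intros) auto
  then obtain \<delta> where "\<delta> > 0" and \<delta>: "\<And>x. dist x (sgn u) < \<delta> \<Longrightarrow> dist (ray_beta x) (ray_beta (sgn u)) < d"
    using assms(2) unfolding continuous_at_eps_delta by blast
  define \<delta>' where "\<delta>' = min \<delta> 2"
  have "0 < \<delta>'" "\<delta>' \<le> 2" using \<open>\<delta> > 0\<close> by (auto simp: \<delta>'_def)
  have "arccos 1 < arccos (1 - \<delta>'\<^sup>2 / 2)"
    using \<open>0 < \<delta>'\<close> \<open>\<delta>' \<le> 2\<close> power_mono[of \<delta>' 2 2] by (intro arccos_less_arccos) auto
  then have "arccos (1 - \<delta>'\<^sup>2 / 2) > 0" by simp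
  moreover have "norm (ray_beta v - ray_beta u) < d"
    if "fst v > 0" "ray_angle v u < arccos (1 - \<delta>'\<^sup>2 / 2)" for v
  proof -
    have "v \<noteq> 0" using that(1) by auto
    then have "norm (sgn v - sgn u) < \<delta>'"
      using norm_sgn_diff_less_of_ray_angle[OF \<open>u \<noteq> 0\<close> _ \<open>0 < \<delta>'\<close> \<open>\<delta>' \<le> 2\<close> that(2)] by simp
    then have "dist (ray_beta (sgn v)) (ray_beta (sgn u)) < d"
      by (intro \<delta>) (simp add: dist_norm \<delta>'_def)
    then show ?thesis
      using \<open>u \<noteq> 0\<close> \<open>v \<noteq> 0\<close> by (simp add: ray_beta_sgn dist_norm)
  qed
  ultimately show ?thesis by blast
qed

lemma uniform_discrete_int_pt: "uniform_discrete {\<xi>. int_pt \<xi>}"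
proof (rule uniformI2)
  fix \<xi> \<eta> :: "real \<times> (real^'n)"
  assume "\<xi> \<in> {\<xi>. int_pt \<xi>}" "\<eta> \<in> {\<xi>. int_pt \<xi>}" "\<xi> \<noteq> \<eta>"
  then consider "fst \<xi> - fst \<eta> \<in> \<int>" "fst \<xi> \<noteq> fst \<eta>"
    | j where "snd \<xi> $ j - snd \<eta> $ j \<in> \<int>" "snd \<xi> $ j \<noteq> snd \<eta> $ j"
    unfolding int_pt_def prod_eq_iff vec_eq_iff by auto
  then show "1 \<le> dist \<xi> \<eta>"
  proof cases
    case 1
    then have "1 \<le> dist (fst \<xi>) (fst \<eta>)"
      using Ints_nonzero_abs_ge1[of "fst \<xi> - fst \<eta>"] by (simp add: dist_real_def)
    then show ?thesis using dist_fst_le[of \<xi> \<eta>] by linarith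
  next
    case 2
    then have "1 \<le> dist (snd \<xi> $ j) (snd \<eta> $ j)"
      using Ints_nonzero_abs_ge1[of "snd \<xi> $ j - snd \<eta> $ j"] by (simp add: dist_real_def)
    then show ?thesis using dist_vec_nth_le[of "snd \<xi>" j "snd \<eta>"] dist_snd_le[of \<xi> \<eta>] by linarith
  qed
qed simp

lemma bounded_fst_Dapp_le: "bounded {\<eta>. \<bar>fst \<eta>\<bar> \<le> Q \<and> Dapp u \<eta> \<le> M}"
proof -
  define R where "R = Q * norm (ray_beta u) + M"
  have "- R \<le> snd \<eta> $ j \<and> snd \<eta> $ j \<le> R" if "\<bar>fst \<eta>\<bar> \<le> Q" "Dapp u \<eta> \<le> M" for \<eta> j
  proof -
    have "\<bar>fst \<eta> * ray_beta u $ j\<bar> \<le> Q * norm (ray_beta u)"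
      unfolding abs_mult using that(1) by (intro mult_mono component_le_norm_cart) auto
    then show ?thesis
      using abs_component_le_Dapp[of \<eta> u j] that(2) unfolding R_def by (simp add: abs_le_iff)
  qed
  then have "{\<eta>. \<bar>fst \<eta>\<bar> \<le> Q \<and> Dapp u \<eta> \<le> M} \<subseteq> cbox (-Q) Q \<times> cbox (- vec R) (vec R)"
    by (auto simp: mem_Times_iff mem_box_cart abs_le_iff)
  then show ?thesis
    by (rule bounded_subset[OF bounded_Times[OF bounded_cbox bounded_cbox]])
qed

lemma finite_int_pt_fst_Dapp_le: "finite {\<eta>. int_pt \<eta> \<and> \<bar>fst \<eta>\<bar> \<le> Q \<and> Dapp u \<eta> \<le> M}"
proof -
  have "uniform_discrete {\<eta>. int_pt \<eta> \<and> \<bar>fst \<eta>\<bar> \<le> Q \<and> Dapp u \<eta> \<le> M}"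
    using uniform_discrete_int_pt by (rule uniform_discrete_subset) auto
  moreover have "bounded {\<eta>. int_pt \<eta> \<and> \<bar>fst \<eta>\<bar> \<le> Q \<and> Dapp u \<eta> \<le> M}"
    using bounded_fst_Dapp_le by (rule bounded_subset) auto
  ultimately show ?thesis
    using uniform_discrete_finite_iff by blast
qed

lemma finite_real_set_gap:
  fixes S :: "real set"
  assumes "finite S"
  shows "\<exists>g>0. \<forall>a\<in>S. \<forall>b\<in>S. a < b \<longrightarrow> a + g \<le> b"
proof -
  define G where "G = (\<lambda>(a, b). b - a) ` {(a, b) \<in> S \<times> S. a < b}"
  have "finite G"
    unfolding G_def using assms by (auto intro: finite_subset[of _ "S \<times> S"])
  then have "Min (insert 1 G) > 0"
    by (subst Min_gr_iff) (auto simp: G_def)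
  moreover have "a + Min (insert 1 G) \<le> b" if "a \<in> S" "b \<in> S" "a < b" for a b
  proof -
    have "b - a \<in> G"
      using that unfolding G_def by (intro image_eqI[of _ _ "(a, b)"]) auto
    then have "Min (insert 1 G) \<le> b - a"
      using \<open>finite G\<close> by (intro Min_le) auto
    then show ?thesis by simp
  qed
  ultimately show ?thesis by blast
qed

lemma Dapp_values_separated:
  "\<exists>g>0. \<forall>a b. int_pt a \<and> int_pt b \<and> \<bar>fst a\<bar> \<le> Q \<and> \<bar>fst b\<bar> \<le> Q \<and>
     Dapp u a \<le> M \<and> Dapp u a < Dapp u b \<longrightarrow> Dapp u a + g \<le> Dapp u b"
proof -
  \<comment> \<open>Values above M + 1 exceed every value \<le> M by 1, so only the finite set T matters.\<close>
  define T where "T = {\<eta>. int_pt \<eta> \<and> \<bar>fst \<eta>\<bar> \<le> Q \<and> Dapp u \<eta> \<le> M + 1}"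
  have "finite (Dapp u ` T)"
    unfolding T_def by (intro finite_imageI finite_int_pt_fst_Dapp_le)
  then obtain g where "g > 0" and g: "\<forall>x\<in>Dapp u ` T. \<forall>y\<in>Dapp u ` T. x < y \<longrightarrow> x + g \<le> y"
    using finite_real_set_gap by blast
  have "Dapp u a + min g 1 \<le> Dapp u b"
    if "int_pt a" "int_pt b" "\<bar>fst a\<bar> \<le> Q" "\<bar>fst b\<bar> \<le> Q" "Dapp u a \<le> M" "Dapp u a < Dapp u b" for a b
  proof (cases "Dapp u b \<le> M + 1")
    case True
    then have "a \<in> T" "b \<in> T" using that by (auto simp: T_def)
    then have "Dapp u a + g \<le> Dapp u b" using g that(6) by (meson imageI)
    then show ?thesis by linarith
  next
    case False
    then show ?thesis using that(5) by linarith
  qed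
  moreover have "min g 1 > 0" using \<open>g > 0\<close> by simp
  ultimately show ?thesis by blast
qed

lemma Dapp_order_stable_near_ray:
  assumes "fst u > 0"
  shows "\<exists>\<epsilon>>0. \<forall>v. fst v > 0 \<and> ray_angle v u < \<epsilon> \<longrightarrow>
    (\<forall>a b. int_pt a \<and> int_pt b \<and> \<bar>fst a\<bar> \<le> Q \<and> \<bar>fst b\<bar> \<le> Q \<and>
       Dapp u a \<le> M \<and> Dapp u a < Dapp u b \<longrightarrow> Dapp v a < Dapp v b)"
proof -
  obtain g where "g > 0" and g: "\<And>a b. int_pt a \<Longrightarrow> int_pt b \<Longrightarrow> \<bar>fst a\<bar> \<le> Q \<Longrightarrow> \<bar>fst b\<bar> \<le> Q \<Longrightarrow>
      Dapp u a \<le> M \<Longrightarrow> Dapp u a < Dapp u b \<Longrightarrow> Dapp u a + g \<le> Dapp u b"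
    using Dapp_values_separated by blast
  have "g / (2 * (\<bar>Q\<bar> + 1)) > 0" using \<open>g > 0\<close> by simp
  then obtain \<epsilon> where "\<epsilon> > 0" and \<epsilon>: "\<And>v. fst v > 0 \<Longrightarrow> ray_angle v u < \<epsilon> \<Longrightarrow>
      norm (ray_beta v - ray_beta u) < g / (2 * (\<bar>Q\<bar> + 1))"
    using ray_beta_close_of_small_angle[OF assms] by blast
  have close: "\<bar>Dapp v \<eta> - Dapp u \<eta>\<bar> < g / 2"
    if "fst v > 0" "ray_angle v u < \<epsilon>" "\<bar>fst \<eta>\<bar> \<le> Q" for v \<eta>
  proof -
    have "\<bar>Dapp v \<eta> - Dapp u \<eta>\<bar> \<le> \<bar>fst \<eta>\<bar> * norm (ray_beta v - ray_beta u)"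
      by (rule abs_Dapp_diff_le)
    also have "\<dots> \<le> (\<bar>Q\<bar> + 1) * norm (ray_beta v - ray_beta u)"
      using that(3) by (intro mult_right_mono) auto
    also have "\<dots> < (\<bar>Q\<bar> + 1) * (g / (2 * (\<bar>Q\<bar> + 1)))"
      using \<epsilon>[OF that(1,2)] by (intro mult_strict_left_mono) auto
    also have "\<dots> = g / 2"
      using abs_ge_zero[of Q] by (simp add: field_simps)
    finally show ?thesis .
  qed
  show ?thesis
  proof (intro exI[of _ \<epsilon>] conjI allI impI \<open>\<epsilon> > 0\<close>)
    fix v a b
    assume "0 < fst v \<and> ray_angle v u < \<epsilon>"
      and "int_pt a \<and> int_pt b \<and> \<bar>fst a\<bar> \<le> Q \<and> \<bar>fst b\<bar> \<le> Q \<and> Dapp u a \<le> M \<and> Dapp u a < Dapp u b"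
    then have "Dapp u a + g \<le> Dapp u b" "\<bar>Dapp v a - Dapp u a\<bar> < g / 2" "\<bar>Dapp v b - Dapp u b\<bar> < g / 2"
      using g close by blast+
    then show "Dapp v a < Dapp v b" unfolding abs_less_iff by linarith
  qed
qed

lemma best_approx_Dapp_less:
  "best_approx u \<xi> \<Longrightarrow> int_pt \<eta> \<Longrightarrow> 1 \<le> fst \<eta> \<Longrightarrow> fst \<eta> \<le> fst \<xi> \<Longrightarrow> \<eta> \<noteq> \<xi> \<Longrightarrow>
    Dapp u \<xi> < Dapp u \<eta>"
  unfolding best_approx_def by blast

lemma best_approx_Dapp_le_Dapp_one:
  assumes "best_approx u \<xi>"
  shows "Dapp u \<xi> \<le> Dapp u (1, 0)"
proof (cases "\<xi> = (1, 0)")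
  case False
  have "int_pt (1 :: real, 0 :: real^'n)" "1 \<le> fst \<xi>"
    using assms by (simp_all add: int_pt_def best_approx_def)
  then have "Dapp u \<xi> < Dapp u (1, 0)"
    using False by (intro best_approx_Dapp_less[OF assms]) auto
  then show ?thesis by simp
qed simp

lemma best_approx_if_Dapp_less_preserved:
  assumes "best_approx u \<xi>"
    and "\<And>\<eta>. int_pt \<eta> \<Longrightarrow> 1 \<le> fst \<eta> \<Longrightarrow> fst \<eta> \<le> fst \<xi> \<Longrightarrow> Dapp u \<xi> < Dapp u \<eta> \<Longrightarrow>
      Dapp v \<xi> < Dapp v \<eta>"
  shows "best_approx v \<xi>"
  using assms best_approx_Dapp_less[OF assms(1)] unfolding best_approx_def by blast

lemma best_approx_fst_le_of_Dapp_eq_0: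
  assumes "best_approx u \<xi>" "int_pt \<eta>" "1 \<le> fst \<eta>" "Dapp u \<eta> = 0"
  shows "fst \<xi> \<le> fst \<eta>"
proof (rule ccontr)
  assume "\<not> fst \<xi> \<le> fst \<eta>"
  then have "fst \<eta> \<le> fst \<xi>" "\<eta> \<noteq> \<xi>" by auto
  then have "Dapp u \<xi> < Dapp u \<eta>"
    using assms(1-3) by (intro best_approx_Dapp_less)
  then show False
    using assms(4) Dapp_nonneg[of u \<xi>] by simp
qed

theorem lemma2p1:
  fixes \<pi> :: "(real \<times> (real^'n)) set" and \<zeta> \<zeta>\<tau> :: "real \<times> (real^'n)"
  assumes "absolutely_rational \<pi>"
    and "dim \<pi> \<ge> 2"
    and "int_pt \<zeta>" and "\<zeta> \<in> \<pi>" and "fst \<zeta> > 0"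
    and "best_approx \<zeta> \<zeta>"
    and "best_approx \<zeta> \<zeta>\<tau>" and "fst \<zeta>\<tau> \<le> fst \<zeta>"
    and "\<forall>\<xi>. best_approx \<zeta> \<xi> \<and> fst \<zeta>\<tau> \<le> fst \<xi> \<and> fst \<xi> \<le> fst \<zeta> \<longrightarrow> \<xi> \<in> \<pi>"
    and "\<forall>\<xi>. int_pt \<xi> \<and> \<xi> \<notin> \<pi> \<longrightarrow> Dapp \<zeta> \<zeta>\<tau> < Dapp \<zeta> \<xi>"
  shows "\<exists>\<epsilon>>0. \<forall>v. fst v > 0 \<and> ray_angle v \<zeta> < \<epsilon> \<longrightarrow>
           {\<xi>. best_approx \<zeta> \<xi>} \<subseteq> {\<xi>. best_approx v \<xi>} \<and>
           (\<forall>\<xi>. best_approx v \<xi> \<and> fst \<zeta>\<tau> \<le> fst \<xi> \<and> fst \<xi> \<le> fst \<zeta> \<longrightarrow> \<xi> \<in> \<pi>)"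
proof -
  define M where "M = Dapp \<zeta> (1, 0)"
  have best_bounds: "1 \<le> fst \<xi> \<and> fst \<xi> \<le> fst \<zeta> \<and> Dapp \<zeta> \<xi> \<le> M" if "best_approx \<zeta> \<xi>" for \<xi>
    using that best_approx_Dapp_le_Dapp_one[OF that] assms(3,5,6) Dapp_self[of \<zeta>]
      best_approx_fst_le_of_Dapp_eq_0[OF that assms(3)]
    unfolding M_def best_approx_def by auto
  obtain \<epsilon> where "\<epsilon> > 0" and stable: "\<And>v a b. fst v > 0 \<and> ray_angle v \<zeta> < \<epsilon> \<Longrightarrow>
      int_pt a \<and> int_pt b \<and> \<bar>fst a\<bar> \<le> fst \<zeta> \<and> \<bar>fst b\<bar> \<le> fst \<zeta> \<and>
      Dapp \<zeta> a \<le> M \<and> Dapp \<zeta> a < Dapp \<zeta> b \<Longrightarrow> Dapp v a < Dapp v b"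
    using Dapp_order_stable_near_ray[OF assms(5), of "fst \<zeta>" M] by blast
  have \<zeta>\<tau>: "int_pt \<zeta>\<tau>" "1 \<le> fst \<zeta>\<tau>" "\<zeta>\<tau> \<in> \<pi>"
    using assms(7-9) unfolding best_approx_def by blast+
  show ?thesis
  proof (intro exI[of _ \<epsilon>] conjI allI impI subsetI \<open>\<epsilon> > 0\<close>)
    fix v \<xi>
    assume v: "0 < fst v \<and> ray_angle v \<zeta> < \<epsilon>" and "\<xi> \<in> {\<xi>. best_approx \<zeta> \<xi>}"
    then have \<xi>: "best_approx \<zeta> \<xi>" by simp
    show "\<xi> \<in> {\<xi>. best_approx v \<xi>}"
      using best_bounds[OF \<xi>] \<xi>
      by (auto intro!: best_approx_if_Dapp_less_preserved stable[OF v] simp: best_approx_def)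
  next
    fix v \<xi>
    assume v: "0 < fst v \<and> ray_angle v \<zeta> < \<epsilon>"
      and \<xi>: "best_approx v \<xi> \<and> fst \<zeta>\<tau> \<le> fst \<xi> \<and> fst \<xi> \<le> fst \<zeta>"
    then have "int_pt \<xi>" by (simp add: best_approx_def)
    show "\<xi> \<in> \<pi>"
    proof (rule ccontr)
      assume "\<xi> \<notin> \<pi>"
      then have "Dapp \<zeta> \<zeta>\<tau> < Dapp \<zeta> \<xi>"
        using assms(10) \<open>int_pt \<xi>\<close> by blast
      then have "Dapp v \<zeta>\<tau> < Dapp v \<xi>"
        using best_bounds[OF assms(7)] \<xi> \<zeta>\<tau> \<open>int_pt \<xi>\<close> by (intro stable[OF v]) auto
      moreover have "Dapp v \<xi> < Dapp v \<zeta>\<tau>"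
        using \<xi> \<zeta>\<tau> \<open>\<xi> \<notin> \<pi>\<close> by (intro best_approx_Dapp_less) auto
      ultimately show False by simp
    qed
  qed
qed

end
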